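(* Let $(W,S,A,\alpha,\beta,R)$ be a POMDP, $\gamma\in(0,1)$ a discount factor and $\mu\in\Delta_W$ a start distribution. Then there is a stationary policy $\pi^\ast\in\Delta_{S,A}$ that is deterministic on each $s\in S$ with $|\operatorname{supp}(\beta(s|\cdot))|\le1$ (i.e. $\pi^\ast(\cdot|s)$ is a point mass for each such $s$) and satisfies $\mathcal{R}^\gamma_\mu(\pi^\ast)\ge\mathcal{R}^\gamma_\mu(\pi)$ for all $\pi\in\Delta_{S,A}$.
   Context: A POMDP is a tuple $(W,S,A,\alpha,\beta,R)$ with $W,S,A$ finite sets, $\beta(s|w)$ a Markov kernel from $W$ to $S$, $\alpha(w'|w,a)$ a Markov kernel from $W\times A$ to $W$, and $R\colon W\times A\to\mathbb{R}$. A stationary policy is a Markov kernel $\pi(a|s)$ from $S$ to $A$; $\Delta_{S,A}$ is the set of these. Running $\pi$ means: $w_0\sim\mu$, and at each time $t$ a sensor state $s_t\sim\beta(\cdot|w_t)$ is observed, an action $a_t\sim\pi(\cdot|s_t)$ is chosen, and $w_{t+1}\sim\alpha(\cdot|w_t,a_t)$. The discounted expected reward is $\mathcal{R}^\gamma_\mu(\pi)=\lim_{T\to\infty}\mathbb{E}\big[\sum_{t=0}^{T-1}\gamma^tR(w_t,a_t)\big]$ under this process. $\operatorname{supp}(\beta(s|\cdot))=\{w\colon\beta(s|w)>0\}$. *)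

theory Defs
  imports "HOL-Analysis.Analysis"
begin

text \<open>Finite sets W, S, A are modelled by finite types 'w, 's, 'a.
  A probability distribution on a finite type is a nonnegative function summing to 1.
  A Markov kernel K from X to Y is written K x y = K(y|x).\<close>

definition prob_dist :: "('x::finite \<Rightarrow> real) \<Rightarrow> bool" where
  "prob_dist p \<longleftrightarrow> (\<forall>x. 0 \<le> p x) \<and> (\<Sum>x\<in>UNIV. p x) = 1"

definition markov_kernel :: "('x \<Rightarrow> 'y::finite \<Rightarrow> real) \<Rightarrow> bool" where
  "markov_kernel K \<longleftrightarrow> (\<forall>x. prob_dist (K x))"

text \<open>Distribution of the world state w_t when running policy pi:
  alpha w a w' = alpha(w'|w,a), beta w s = beta(s|w), pol s a = pi(a|s).\<close>

fun state_dist ::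
  "('w::finite \<Rightarrow> 'a::finite \<Rightarrow> 'w \<Rightarrow> real) \<Rightarrow> ('w \<Rightarrow> 's::finite \<Rightarrow> real) \<Rightarrow>
   ('s \<Rightarrow> 'a \<Rightarrow> real) \<Rightarrow> ('w \<Rightarrow> real) \<Rightarrow> nat \<Rightarrow> 'w \<Rightarrow> real" where
  "state_dist alpha beta pol mu 0 = mu"
| "state_dist alpha beta pol mu (Suc t) =
     (\<lambda>w'. \<Sum>w\<in>UNIV. \<Sum>s\<in>UNIV. \<Sum>a\<in>UNIV.
        state_dist alpha beta pol mu t w * beta w s * pol s a * alpha w a w')"

definition exp_reward ::
  "('w::finite \<Rightarrow> 'a::finite \<Rightarrow> 'w \<Rightarrow> real) \<Rightarrow> ('w \<Rightarrow> 's::finite \<Rightarrow> real) \<Rightarrow>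
   ('w \<Rightarrow> 'a \<Rightarrow> real) \<Rightarrow> ('s \<Rightarrow> 'a \<Rightarrow> real) \<Rightarrow> ('w \<Rightarrow> real) \<Rightarrow> nat \<Rightarrow> real" where
  "exp_reward alpha beta R pol mu t =
     (\<Sum>w\<in>UNIV. \<Sum>s\<in>UNIV. \<Sum>a\<in>UNIV.
        state_dist alpha beta pol mu t w * beta w s * pol s a * R w a)"

definition disc_reward ::
  "('w::finite \<Rightarrow> 'a::finite \<Rightarrow> 'w \<Rightarrow> real) \<Rightarrow> ('w \<Rightarrow> 's::finite \<Rightarrow> real) \<Rightarrow>
   ('w \<Rightarrow> 'a \<Rightarrow> real) \<Rightarrow> real \<Rightarrow> ('w \<Rightarrow> real) \<Rightarrow> ('s \<Rightarrow> 'a \<Rightarrow> real) \<Rightarrow> real" where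
  "disc_reward alpha beta R gamma mu pol =
     lim (\<lambda>T. \<Sum>t<T. gamma ^ t * exp_reward alpha beta R pol mu t)"

end

theory Submission
  imports Defs
begin

text \<open>An optimal stationary policy exists because the discounted reward is a uniformly convergent
  series of continuous functions of the policy, which ranges over a compact set. If a sensor state
  s is emitted by at most one world state w, then replacing \<open>\<pi>(\<cdot>|s)\<close> by a point mass on an action
  maximising the Q-value of w under \<open>\<pi>\<close> can only increase the right-hand side of the Bellman
  equation of \<open>\<pi>\<close>. Iterating this Bellman inequality along the new policy, the discounted
  remainder vanishes, so the new policy is at least as good as \<open>\<pi>\<close> and hence still optimal.\<close>

definition point_mass :: "'x \<Rightarrow> 'x \<Rightarrow> real" where
  "point_mass v = (\<lambda>x. if x = v then 1 else 0)"

lemma prob_dist_point_mass: "prob_dist (point_mass (v::'x::finite))"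
  by (simp add: prob_dist_def point_mass_def)

lemma sum_point_mass_mult [simp]: "(\<Sum>x\<in>UNIV. point_mass v x * f x) = f (v::'x::finite)"
  by (subst sum.cong[OF refl, of _ _ "\<lambda>x. if x = v then f x else 0"]) (auto simp: point_mass_def)

lemma sum_mult_point_mass [simp]: "(\<Sum>v\<in>UNIV. f v * point_mass v x) = f (x::'x::finite)"
  by (subst sum.cong[OF refl, of _ _ "\<lambda>v. if v = x then f v else 0"]) (auto simp: point_mass_def)

lemma prob_dist_sum_mult_le:
  assumes "prob_dist p" "\<And>x. f x \<le> B"
  shows "(\<Sum>x\<in>UNIV. p x * f x) \<le> B"
proof -
  have "(\<Sum>x\<in>UNIV. p x * f x) \<le> (\<Sum>x\<in>UNIV. p x * B)"
    using assms by (intro sum_mono mult_left_mono) (auto simp: prob_dist_def)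
  also have "\<dots> = B"
    using assms(1) by (simp add: prob_dist_def flip: sum_distrib_right)
  finally show ?thesis .
qed

lemma prob_dist_abs_sum_mult_le:
  assumes "prob_dist p" "\<And>x. \<bar>f x\<bar> \<le> B"
  shows "\<bar>\<Sum>x\<in>UNIV. p x * f x\<bar> \<le> B"
proof -
  have "(\<Sum>x\<in>UNIV. p x * f x) \<le> B"
    using assms by (intro prob_dist_sum_mult_le) (auto simp: abs_le_iff)
  moreover have "(\<Sum>x\<in>UNIV. p x * - f x) \<le> B"
    using assms by (intro prob_dist_sum_mult_le) (auto simp: abs_le_iff)
  ultimately show ?thesis
    by (simp add: sum_negf abs_le_iff)
qed

lemma prob_dist_mixture:
  assumes "prob_dist p" "\<And>x. prob_dist (K x)"
  shows "prob_dist (\<lambda>y. \<Sum>x\<in>UNIV. p x * K x y)"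
proof -
  have "(\<Sum>y\<in>UNIV. \<Sum>x\<in>UNIV. p x * K x y) = (\<Sum>x\<in>UNIV. p x * (\<Sum>y\<in>UNIV. K x y))"
    by (subst sum.swap) (simp add: sum_distrib_left)
  with assms show ?thesis
    by (auto simp: prob_dist_def intro!: sum_nonneg mult_nonneg_nonneg)
qed

lemma finite_max_attained: "\<exists>a::'a::finite. \<forall>b. f b \<le> (f a :: 'b::linorder)"
proof -
  have "Max (range f) \<in> range f"
    by (rule Max_in) simp_all
  then obtain a where a: "Max (range f) = f a"
    by (rule rangeE)
  have "f b \<le> f a" for b
    unfolding a[symmetric] by (rule Max_ge) simp_all
  then show ?thesis by blast
qed

text \<open>Policies are encoded as real matrices indexed by sensor states and actions, so that
  compactness and continuity can be taken from the Euclidean topology.\<close>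

lemma compact_markov_kernels:
  "compact {x :: real^'y::finite^'x::finite. markov_kernel (\<lambda>s a. x $ s $ a)}"
proof -
  let ?K = "{x :: real^'y^'x. markov_kernel (\<lambda>s a. x $ s $ a)}"
  have K: "?K = {x. \<forall>s a. 0 \<le> x $ s $ a} \<inter> {x. \<forall>s. (\<Sum>a\<in>UNIV. x $ s $ a) = 1}"
    by (auto simp: markov_kernel_def prob_dist_def)
  have "closed ?K"
    unfolding K
    by (intro closed_Int closed_Collect_all closed_Collect_le closed_Collect_eq continuous_intros)
  moreover have "norm x \<le> real CARD('x)" if "x \<in> ?K" for x
  proof -
    have "norm (x $ s) \<le> 1" for s
    proof -
      have "norm (x $ s) \<le> (\<Sum>a\<in>UNIV. norm (x $ s $ a))"
        unfolding norm_vec_def by (rule L2_set_le_sum) simp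
      also have "\<dots> = 1"
        using that by (simp add: K)
      finally show ?thesis .
    qed
    then have "(\<Sum>s\<in>UNIV. norm (x $ s)) \<le> real CARD('x)"
      using sum_mono[of UNIV "\<lambda>s. norm (x $ s)" "\<lambda>_. 1"] by simp
    moreover have "norm x \<le> (\<Sum>s\<in>UNIV. norm (x $ s))"
      unfolding norm_vec_def by (rule L2_set_le_sum) simp
    ultimately show ?thesis
      by linarith
  qed
  then have "bounded ?K"
    unfolding bounded_iff by blast
  ultimately show ?thesis
    by (simp add: compact_eq_bounded_closed)
qed

locale discounted_pomdp =
  fixes alpha :: "'w::finite \<Rightarrow> 'a::finite \<Rightarrow> 'w \<Rightarrow> real"
    and beta :: "'w \<Rightarrow> 's::finite \<Rightarrow> real"
    and R :: "'w \<Rightarrow> 'a \<Rightarrow> real"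
    and gamma :: real
  assumes beta: "markov_kernel beta"
    and alpha: "\<And>w a. prob_dist (alpha w a)"
    and gamma_pos: "0 < gamma" and gamma_less_1: "gamma < 1"
begin

abbreviation discounted :: "('w \<Rightarrow> real) \<Rightarrow> ('s \<Rightarrow> 'a \<Rightarrow> real) \<Rightarrow> real" where
  "discounted mu pol \<equiv> disc_reward alpha beta R gamma mu pol"

definition world_step :: "('s \<Rightarrow> 'a \<Rightarrow> real) \<Rightarrow> 'w \<Rightarrow> 'w \<Rightarrow> real" where
  "world_step pol w w' = (\<Sum>s\<in>UNIV. beta w s * (\<Sum>a\<in>UNIV. pol s a * alpha w a w'))"

definition step_reward :: "('s \<Rightarrow> 'a \<Rightarrow> real) \<Rightarrow> 'w \<Rightarrow> real" where
  "step_reward pol w = (\<Sum>s\<in>UNIV. beta w s * (\<Sum>a\<in>UNIV. pol s a * R w a))"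

lemma state_dist_Suc_eq:
  "state_dist alpha beta pol mu (Suc t) w' =
     (\<Sum>w\<in>UNIV. state_dist alpha beta pol mu t w * world_step pol w w')"
  by (simp add: world_step_def sum_distrib_left mult.assoc)

lemma exp_reward_eq:
  "exp_reward alpha beta R pol mu t = (\<Sum>w\<in>UNIV. state_dist alpha beta pol mu t w * step_reward pol w)"
  by (simp add: exp_reward_def step_reward_def sum_distrib_left mult.assoc)

lemma prob_dist_beta: "prob_dist (beta w)"
  using beta by (simp add: markov_kernel_def)

lemma prob_dist_world_step:
  assumes "markov_kernel pol"
  shows "prob_dist (world_step pol w)"
  unfolding world_step_def using assms
  by (intro prob_dist_mixture prob_dist_beta alpha) (simp add: markov_kernel_def)

lemma prob_dist_state_dist:
  assumes "markov_kernel pol" "prob_dist mu"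
  shows "prob_dist (state_dist alpha beta pol mu t)"
proof (induction t)
  case 0
  then show ?case using assms(2) by simp
next
  case (Suc t)
  then show ?case
    unfolding state_dist_Suc_eq[abs_def]
    by (intro prob_dist_mixture prob_dist_world_step assms(1))
qed

definition reward_bound :: real where
  "reward_bound = (\<Sum>(w, a)\<in>UNIV. \<bar>R w a\<bar>)"

lemma abs_R_le: "\<bar>R w a\<bar> \<le> reward_bound"
  unfolding reward_bound_def using member_le_sum[of "(w, a)" UNIV "\<lambda>(w, a). \<bar>R w a\<bar>"] by auto

lemma abs_exp_reward_le:
  assumes "markov_kernel pol" "prob_dist mu"
  shows "\<bar>exp_reward alpha beta R pol mu t\<bar> \<le> reward_bound"
  using assms unfolding exp_reward_eq step_reward_def
  by (intro prob_dist_abs_sum_mult_le prob_dist_state_dist prob_dist_beta abs_R_le)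
     (auto simp: markov_kernel_def)

lemma summable_reward_bound: "summable (\<lambda>t. reward_bound * gamma ^ t)"
  using gamma_pos gamma_less_1 by (intro summable_mult summable_geometric) auto

lemma norm_disc_term_le:
  assumes "markov_kernel pol" "prob_dist mu"
  shows "norm (gamma ^ t * exp_reward alpha beta R pol mu t) \<le> reward_bound * gamma ^ t"
  using mult_left_mono[OF abs_exp_reward_le[OF assms], of "gamma ^ t"] gamma_pos
  by (simp add: abs_mult mult.commute)

lemma disc_reward_sums:
  assumes "markov_kernel pol" "prob_dist mu"
  shows "(\<lambda>t. gamma ^ t * exp_reward alpha beta R pol mu t) sums discounted mu pol"
proof -
  have summable: "summable (\<lambda>t. gamma ^ t * exp_reward alpha beta R pol mu t)"
    using norm_disc_term_le[OF assms] by (blast intro: summable_comparison_test[OF _ summable_reward_bound])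
  then have "discounted mu pol = (\<Sum>t. gamma ^ t * exp_reward alpha beta R pol mu t)"
    unfolding disc_reward_def by (rule limI[OF summable_LIMSEQ])
  with summable show ?thesis
    by (simp add: summable_sums)
qed

lemma state_dist_linear:
  "state_dist alpha beta pol mu t w' = (\<Sum>v\<in>UNIV. mu v * state_dist alpha beta pol (point_mass v) t w')"
proof (induction t arbitrary: w')
  case 0
  show ?case
    by simp
next
  case (Suc t)
  have "state_dist alpha beta pol mu (Suc t) w' =
      (\<Sum>w\<in>UNIV. \<Sum>v\<in>UNIV. mu v * (state_dist alpha beta pol (point_mass v) t w * world_step pol w w'))"
    by (simp only: state_dist_Suc_eq Suc sum_distrib_right mult.assoc)
  also have "\<dots> = (\<Sum>v\<in>UNIV. mu v * state_dist alpha beta pol (point_mass v) (Suc t) w')"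
    by (subst sum.swap) (simp only: state_dist_Suc_eq sum_distrib_left)
  finally show ?case .
qed

lemma exp_reward_linear:
  "exp_reward alpha beta R pol mu t = (\<Sum>v\<in>UNIV. mu v * exp_reward alpha beta R pol (point_mass v) t)"
proof -
  have "exp_reward alpha beta R pol mu t =
      (\<Sum>w\<in>UNIV. \<Sum>v\<in>UNIV. mu v * (state_dist alpha beta pol (point_mass v) t w * step_reward pol w))"
    unfolding exp_reward_eq by (subst state_dist_linear) (simp add: sum_distrib_right mult.assoc)
  also have "\<dots> = (\<Sum>v\<in>UNIV. mu v * exp_reward alpha beta R pol (point_mass v) t)"
    by (subst sum.swap) (simp only: exp_reward_eq sum_distrib_left)
  finally show ?thesis .
qed

definition state_value :: "('s \<Rightarrow> 'a \<Rightarrow> real) \<Rightarrow> 'w \<Rightarrow> real" where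
  "state_value pol w = discounted (point_mass w) pol"

lemma discounted_eq_state_value:
  assumes "markov_kernel pol" "prob_dist mu"
  shows "discounted mu pol = (\<Sum>v\<in>UNIV. mu v * state_value pol v)"
proof -
  have "(\<lambda>t. \<Sum>v\<in>UNIV. mu v * (gamma ^ t * exp_reward alpha beta R pol (point_mass v) t))
      sums (\<Sum>v\<in>UNIV. mu v * state_value pol v)"
    unfolding state_value_def
    by (intro sums_sum sums_mult disc_reward_sums[OF assms(1) prob_dist_point_mass])
  also have "(\<lambda>t. \<Sum>v\<in>UNIV. mu v * (gamma ^ t * exp_reward alpha beta R pol (point_mass v) t)) =
      (\<lambda>t. gamma ^ t * exp_reward alpha beta R pol mu t)"
    by (simp add: exp_reward_linear[of pol mu] sum_distrib_left mult_ac)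
  finally show ?thesis
    by (rule sums_unique2[OF disc_reward_sums[OF assms]])
qed

lemma state_dist_Suc_shift:
  "state_dist alpha beta pol mu (Suc t) = state_dist alpha beta pol (state_dist alpha beta pol mu 1) t"
proof (induction t)
  case (Suc t)
  show ?case
    by (rule ext) (simp only: state_dist_Suc_eq[of _ _ "Suc t"] state_dist_Suc_eq[of _ _ t] Suc)
qed simp

lemma state_dist_point_mass_1: "state_dist alpha beta pol (point_mass w) 1 = world_step pol w"
  by (rule ext) (simp only: One_nat_def state_dist_Suc_eq state_dist.simps(1) sum_point_mass_mult)

definition bellman_op :: "('s \<Rightarrow> 'a \<Rightarrow> real) \<Rightarrow> ('w \<Rightarrow> real) \<Rightarrow> 'w \<Rightarrow> real" where
  "bellman_op pol U w = step_reward pol w + gamma * (\<Sum>w'\<in>UNIV. world_step pol w w' * U w')"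

lemma state_value_bellman:
  assumes "markov_kernel pol"
  shows "state_value pol w = bellman_op pol (state_value pol) w"
proof -
  let ?f = "\<lambda>t. gamma ^ t * exp_reward alpha beta R pol (point_mass w) t"
  have "(\<lambda>t. ?f (Suc t)) = (\<lambda>t. gamma * (gamma ^ t * exp_reward alpha beta R pol (world_step pol w) t))"
    by (simp only: exp_reward_def state_dist_Suc_shift state_dist_point_mass_1 power_Suc mult.assoc)
  moreover have "(\<lambda>t. gamma * (gamma ^ t * exp_reward alpha beta R pol (world_step pol w) t))
      sums (gamma * (\<Sum>w'\<in>UNIV. world_step pol w w' * state_value pol w'))"
    using disc_reward_sums[OF assms prob_dist_world_step[OF assms]]
    by (simp add: sums_mult discounted_eq_state_value[OF assms prob_dist_world_step[OF assms]])
  ultimately have "(\<lambda>t. ?f (Suc t)) sums (gamma * (\<Sum>w'\<in>UNIV. world_step pol w w' * state_value pol w'))"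
    by (simp only:)
  then have "?f sums (gamma * (\<Sum>w'\<in>UNIV. world_step pol w w' * state_value pol w') + ?f 0)"
    by (rule iffD1[OF sums_Suc_iff])
  moreover have "?f 0 = step_reward pol w"
    by (simp add: exp_reward_eq)
  ultimately have "?f sums bellman_op pol (state_value pol) w"
    by (simp add: bellman_op_def add.commute)
  then show ?thesis
    unfolding state_value_def by (rule sums_unique2[OF disc_reward_sums[OF assms prob_dist_point_mass]])
qed

definition q_value :: "('w \<Rightarrow> real) \<Rightarrow> 'w \<Rightarrow> 'a \<Rightarrow> real" where
  "q_value U w a = R w a + gamma * (\<Sum>w'\<in>UNIV. alpha w a w' * U w')"

lemma bellman_op_eq_q_value:
  "bellman_op pol U w = (\<Sum>s\<in>UNIV. beta w s * (\<Sum>a\<in>UNIV. pol s a * q_value U w a))"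
proof -
  have "(\<Sum>w'\<in>UNIV. world_step pol w w' * U w') =
      (\<Sum>w'\<in>UNIV. \<Sum>s\<in>UNIV. \<Sum>a\<in>UNIV. beta w s * (pol s a * (alpha w a w' * U w')))"
    by (simp add: world_step_def sum_distrib_left sum_distrib_right mult.assoc)
  also have "\<dots> = (\<Sum>s\<in>UNIV. beta w s * (\<Sum>a\<in>UNIV. pol s a * (\<Sum>w'\<in>UNIV. alpha w a w' * U w')))"
    by (subst sum.swap, rule sum.cong[OF refl], subst sum.swap) (simp add: sum_distrib_left)
  finally show ?thesis
    by (simp add: bellman_op_def step_reward_def q_value_def distrib_left sum.distrib
        sum_distrib_left mult_ac)
qed

lemma subsolution_le_partial_sum:
  assumes pol: "markov_kernel pol" and mu: "prob_dist mu"
    and U: "\<And>w. U w \<le> bellman_op pol U w"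
  shows "(\<Sum>w\<in>UNIV. mu w * U w) \<le> (\<Sum>t<T. gamma ^ t * exp_reward alpha beta R pol mu t)
           + gamma ^ T * (\<Sum>w\<in>UNIV. state_dist alpha beta pol mu T w * U w)"
proof (induction T)
  case (Suc T)
  let ?d = "state_dist alpha beta pol mu"
  have "(\<Sum>w\<in>UNIV. ?d T w * U w) \<le> (\<Sum>w\<in>UNIV. ?d T w * bellman_op pol U w)"
    using prob_dist_state_dist[OF pol mu] by (intro sum_mono mult_left_mono U) (simp add: prob_dist_def)
  also have "\<dots> = exp_reward alpha beta R pol mu T +
      gamma * (\<Sum>w\<in>UNIV. \<Sum>w'\<in>UNIV. ?d T w * world_step pol w w' * U w')"
    by (simp add: bellman_op_def exp_reward_eq distrib_left sum.distrib sum_distrib_left mult_ac)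
  also have "(\<Sum>w\<in>UNIV. \<Sum>w'\<in>UNIV. ?d T w * world_step pol w w' * U w') =
      (\<Sum>w'\<in>UNIV. ?d (Suc T) w' * U w')"
    by (subst sum.swap) (simp only: state_dist_Suc_eq sum_distrib_right)
  finally have "gamma ^ T * (\<Sum>w\<in>UNIV. ?d T w * U w) \<le>
      gamma ^ T * (exp_reward alpha beta R pol mu T + gamma * (\<Sum>w'\<in>UNIV. ?d (Suc T) w' * U w'))"
    using gamma_pos by (intro mult_left_mono) simp_all
  with Suc show ?case
    by (simp add: algebra_simps)
qed simp

lemma subsolution_le_discounted:
  assumes pol: "markov_kernel pol" and mu: "prob_dist mu"
    and U: "\<And>w. U w \<le> bellman_op pol U w"
  shows "(\<Sum>w\<in>UNIV. mu w * U w) \<le> discounted mu pol"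
proof -
  let ?rem = "\<lambda>T. gamma ^ T * (\<Sum>w\<in>UNIV. state_dist alpha beta pol mu T w * U w)"
  define B where "B = (\<Sum>w\<in>UNIV. \<bar>U w\<bar>)"
  have "\<bar>U w\<bar> \<le> B" for w
    unfolding B_def by (rule member_le_sum) auto
  then have bound: "norm (?rem T) \<le> gamma ^ T * B" for T
    using gamma_pos prob_dist_abs_sum_mult_le[OF prob_dist_state_dist[OF pol mu]]
    by (simp add: abs_mult mult_left_mono)
  have "?rem \<longlonglongrightarrow> 0"
  proof (rule Lim_null_comparison)
    show "\<forall>\<^sub>F T in sequentially. norm (?rem T) \<le> gamma ^ T * B"
      by (intro always_eventually allI bound)
    show "(\<lambda>T. gamma ^ T * B) \<longlonglongrightarrow> 0"
      using gamma_pos gamma_less_1 by (intro tendsto_mult_left_zero LIMSEQ_power_zero) simp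
  qed
  then have "(\<lambda>T. (\<Sum>t<T. gamma ^ t * exp_reward alpha beta R pol mu t) + ?rem T)
      \<longlonglongrightarrow> discounted mu pol + 0"
    using disc_reward_sums[OF pol mu] by (intro tendsto_add) (simp_all add: sums_def)
  then have "(\<Sum>w\<in>UNIV. mu w * U w) \<le> discounted mu pol + 0"
    by (rule LIMSEQ_le_const) (use subsolution_le_partial_sum[OF pol mu U] in blast)
  then show ?thesis
    by simp
qed

theorem policy_improvement:
  assumes pol: "markov_kernel pol" and pol': "markov_kernel pol'" and mu: "prob_dist mu"
    and improves: "\<And>w. bellman_op pol (state_value pol) w \<le> bellman_op pol' (state_value pol) w"
  shows "discounted mu pol \<le> discounted mu pol'"
proof -
  have "state_value pol w \<le> bellman_op pol' (state_value pol) w" for w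
    using improves state_value_bellman[OF pol] by simp
  then have "(\<Sum>w\<in>UNIV. mu w * state_value pol w) \<le> discounted mu pol'"
    by (rule subsolution_le_discounted[OF pol' mu])
  then show ?thesis
    by (simp add: discounted_eq_state_value[OF pol mu])
qed

definition greedy_action :: "('w \<Rightarrow> real) \<Rightarrow> 'w \<Rightarrow> 'a" where
  "greedy_action U w = (SOME a. \<forall>b. q_value U w b \<le> q_value U w a)"

lemma q_value_le_greedy_action: "q_value U w b \<le> q_value U w (greedy_action U w)"
  using someI_ex[OF finite_max_attained[of "q_value U w"]] unfolding greedy_action_def by blast

text \<open>If s is emitted by exactly one world state, SOME picks that world state; if s is never
  emitted, the action chosen at s does not matter.\<close>

definition determinize :: "('w \<Rightarrow> real) \<Rightarrow> ('s \<Rightarrow> 'a \<Rightarrow> real) \<Rightarrow> 's \<Rightarrow> 'a \<Rightarrow> real" where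
  "determinize U pol s =
     (if card {w. 0 < beta w s} \<le> 1 then point_mass (greedy_action U (SOME w. 0 < beta w s))
      else pol s)"

lemma markov_kernel_determinize:
  "markov_kernel pol \<Longrightarrow> markov_kernel (determinize U pol)"
  by (simp add: markov_kernel_def determinize_def prob_dist_point_mass)

lemma bellman_op_le_determinize:
  assumes "markov_kernel pol"
  shows "bellman_op pol U w \<le> bellman_op (determinize U pol) U w"
  unfolding bellman_op_eq_q_value
proof (rule sum_mono)
  fix s :: 's
  let ?Q = "\<lambda>p. \<Sum>a\<in>UNIV. p s a * q_value U w a"
  show "beta w s * ?Q pol \<le> beta w s * ?Q (determinize U pol)"
  proof (cases "0 < beta w s \<and> card {v. 0 < beta v s} \<le> 1")
    case True
    have "0 < beta (SOME v. 0 < beta v s) s"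
      using True by (intro someI[of "\<lambda>v. 0 < beta v s" w]) simp
    with True have "(SOME v. 0 < beta v s) = w"
      using card_le_Suc0_iff_eq[of "{v. 0 < beta v s}"] by auto
    with True have "?Q (determinize U pol) = q_value U w (greedy_action U w)"
      by (simp add: determinize_def)
    moreover have "?Q pol \<le> q_value U w (greedy_action U w)"
      using assms by (intro prob_dist_sum_mult_le q_value_le_greedy_action) (simp add: markov_kernel_def)
    ultimately show ?thesis
      using True by simp
  next
    case False
    moreover have "0 \<le> beta w s"
      using prob_dist_beta by (simp add: prob_dist_def)
    ultimately have "beta w s = 0 \<or> determinize U pol s = pol s"
      by (auto simp: determinize_def)
    then show ?thesis
      by auto
  qed
qed

lemma continuous_on_state_dist:
  "continuous_on UNIV (\<lambda>x::real^'a^'s. state_dist alpha beta (\<lambda>s a. x $ s $ a) mu t w)"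
proof (induction t arbitrary: w)
  case (Suc t)
  then show ?case
    unfolding state_dist.simps by (intro continuous_intros) auto
qed simp

lemma continuous_on_discounted:
  assumes mu: "prob_dist mu"
  shows "continuous_on {x. markov_kernel (\<lambda>s a. x $ s $ a)} (\<lambda>x. discounted mu (\<lambda>s a. x $ s $ a))"
proof -
  let ?K = "{x::real^'a^'s. markov_kernel (\<lambda>s a. x $ s $ a)}"
  let ?f = "\<lambda>t x. gamma ^ t * exp_reward alpha beta R (\<lambda>s a. x $ s $ a) mu t"
  have limit: "uniform_limit ?K (\<lambda>T x. \<Sum>t<T. ?f t x) (\<lambda>x. \<Sum>t. ?f t x) sequentially"
    using norm_disc_term_le[OF _ mu] by (intro Weierstrass_m_test[OF _ summable_reward_bound]) simp
  have "continuous_on ?K (\<lambda>x. \<Sum>t<T. ?f t x)" for T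
    unfolding exp_reward_def
    by (intro continuous_intros continuous_on_subset[OF continuous_on_state_dist]) simp
  then have "continuous_on ?K (\<lambda>x. \<Sum>t. ?f t x)"
    by (intro uniform_limit_theorem[OF always_eventually limit]) simp_all
  then show ?thesis
    by (rule continuous_on_eq) (simp add: sums_unique[OF disc_reward_sums[OF _ mu]])
qed

lemma optimal_policy_exists:
  assumes mu: "prob_dist mu"
  obtains p where "markov_kernel p" "\<And>pol. markov_kernel pol \<Longrightarrow> discounted mu pol \<le> discounted mu p"
proof -
  let ?K = "{x::real^'a^'s. markov_kernel (\<lambda>s a. x $ s $ a)}"
  have "(\<chi> s a. point_mass undefined a) \<in> ?K"
    by (simp add: markov_kernel_def prob_dist_point_mass vec_lambda_inverse)
  then obtain x where x: "x \<in> ?K"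
    and max: "\<And>y. y \<in> ?K \<Longrightarrow> discounted mu (\<lambda>s a. y $ s $ a) \<le> discounted mu (\<lambda>s a. x $ s $ a)"
    using continuous_attains_sup[OF compact_markov_kernels _ continuous_on_discounted[OF mu]] by blast
  show ?thesis
  proof
    show "markov_kernel (\<lambda>s a. x $ s $ a)"
      using x by simp
    show "discounted mu pol \<le> discounted mu (\<lambda>s a. x $ s $ a)" if "markov_kernel pol" for pol
      using max[of "\<chi> s a. pol s a"] that by (simp add: vec_lambda_inverse)
  qed
qed

end

theorem theorem8:
  fixes alpha :: "'w::finite \<Rightarrow> 'a::finite \<Rightarrow> 'w \<Rightarrow> real"
    and beta :: "'w \<Rightarrow> 's::finite \<Rightarrow> real"
    and R :: "'w \<Rightarrow> 'a \<Rightarrow> real"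
    and gamma :: real
    and mu :: "'w \<Rightarrow> real"
  assumes "markov_kernel beta"
    and "\<forall>w a. prob_dist (alpha w a)"
    and "0 < gamma" and "gamma < 1"
    and "prob_dist mu"
  shows "\<exists>pi_opt. markov_kernel pi_opt
           \<and> (\<forall>s. card {w. beta w s > 0} \<le> 1 \<longrightarrow>
                  (\<exists>a. pi_opt s = (\<lambda>b. if b = a then 1 else 0)))
           \<and> (\<forall>pol. markov_kernel pol \<longrightarrow>
                  disc_reward alpha beta R gamma mu pi_opt \<ge> disc_reward alpha beta R gamma mu pol)"
proof -
  interpret discounted_pomdp alpha beta R gamma
    using assms(1-4) by unfold_locales auto
  obtain p where p: "markov_kernel p"
    and p_opt: "\<And>pol. markov_kernel pol \<Longrightarrow> discounted mu pol \<le> discounted mu p"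
    using optimal_policy_exists[OF assms(5)] by blast
  let ?q = "determinize (state_value p) p"
  have q: "markov_kernel ?q"
    by (rule markov_kernel_determinize[OF p])
  have "discounted mu p \<le> discounted mu ?q"
    by (intro policy_improvement p q assms(5) bellman_op_le_determinize)
  moreover have "\<exists>a. ?q s = (\<lambda>b. if b = a then 1 else 0)" if "card {w. beta w s > 0} \<le> 1" for s
    using that by (auto simp: determinize_def point_mass_def)
  ultimately show ?thesis
    using q p_opt by (intro exI[of _ ?q]) (auto intro: order_trans)
qed

end
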